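(* Let $n\ge 2k\ge 2$, let $S\subseteq\{0,1,\ldots,k-1\}$ be nonempty, and let $X=\bigcup_{i\in S}J(n,k,i)$. If $X$ admits perfect state transfer between two distinct vertices, then $n=2k$.
   Context: $J(n,k,i)$ is the graph on the $k$-subsets of $\{1,\ldots,n\}$ with $A\sim B$ iff $|A\cap B|=i$; the union $\bigcup_{i\in S}J(n,k,i)$ is the graph on the same vertex set with $A\sim B$ iff $|A\cap B|\in S$. For a simple graph $X$ with adjacency matrix $A$, let $\mathcal{H}_X(t)=e^{itA}$; there is perfect state transfer between vertices $u\ne v$ if $|\mathcal{H}_X(\tau)_{u,v}|=1$ for some $\tau>0$. *)

theory Defs
  imports "HOL-Analysis.Analysis"
begin

definition ksubsets :: "nat \<Rightarrow> nat \<Rightarrow> nat set set" where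
  "ksubsets n k = {A. A \<subseteq> {1..n} \<and> card A = k}"

text \<open>Adjacency relation of the union of J(n,k,i) over i in S.\<close>
definition jgraph_union_adj :: "nat set \<Rightarrow> nat set \<Rightarrow> nat set \<Rightarrow> bool" where
  "jgraph_union_adj S A B \<longleftrightarrow> card (A \<inter> B) \<in> S"

definition adj_matrix :: "('a \<Rightarrow> 'a \<Rightarrow> bool) \<Rightarrow> 'a \<Rightarrow> 'a \<Rightarrow> complex" where
  "adj_matrix E u v = (if E u v then 1 else 0)"

fun mat_pow :: "'a set \<Rightarrow> ('a \<Rightarrow> 'a \<Rightarrow> complex) \<Rightarrow> nat \<Rightarrow> 'a \<Rightarrow> 'a \<Rightarrow> complex" where
  "mat_pow V M 0 = (\<lambda>u v. if u = v then 1 else 0)"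
| "mat_pow V M (Suc m) = (\<lambda>u v. \<Sum>w\<in>V. mat_pow V M m u w * M w v)"

definition transition_matrix ::
  "'a set \<Rightarrow> ('a \<Rightarrow> 'a \<Rightarrow> bool) \<Rightarrow> real \<Rightarrow> 'a \<Rightarrow> 'a \<Rightarrow> complex" where
  "transition_matrix V E t u v =
     (\<Sum>m. (\<i> * complex_of_real t) ^ m / of_nat (fact m) * mat_pow V (adj_matrix E) m u v)"

definition has_pst :: "'a set \<Rightarrow> ('a \<Rightarrow> 'a \<Rightarrow> bool) \<Rightarrow> bool" where
  "has_pst V E \<longleftrightarrow> (\<exists>u\<in>V. \<exists>v\<in>V. u \<noteq> v \<and>
      (\<exists>\<tau>>0. cmod (transition_matrix V E \<tau> u v) = 1))"

end

theory Submission
  imports Defs "HOL-Combinatorics.Transposition"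
begin

text \<open>
  For a Hermitian matrix \<open>M\<close> the matrix \<open>U(t) = exp(itM)\<close> is unitary, so every row of \<open>U(t)\<close>
  has Euclidean norm 1; perfect state transfer from \<open>u\<close> to \<open>v\<close> therefore forces \<open>U(t)\<close> to vanish
  on the rest of row \<open>u\<close>. Any automorphism of the graph commutes with \<open>U(t)\<close>, so an automorphism
  fixing \<open>u\<close> but moving \<open>v\<close> to \<open>v'\<close> yields \<open>|U(t)\<^sub>u\<^sub>v'| = |U(t)\<^sub>u\<^sub>v| = 1\<close>, which is impossible.
  If \<open>n > 2k\<close>, then for distinct \<open>k\<close>-sets \<open>A\<close>, \<open>B\<close> there is a point \<open>c\<close> outside \<open>A \<union> B\<close>, and
  the transposition of \<open>c\<close> with a point of \<open>B - A\<close> is such an automorphism of every graph on the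
  \<open>k\<close>-sets whose adjacency depends only on \<open>|A \<inter> B|\<close>; no hypothesis on \<open>S\<close> is needed.
\<close>

definition evolution :: "'a set \<Rightarrow> ('a \<Rightarrow> 'a \<Rightarrow> complex) \<Rightarrow> real \<Rightarrow> 'a \<Rightarrow> 'a \<Rightarrow> complex" where
  "evolution V M t u v = (\<Sum>m. (\<i> * complex_of_real t) ^ m / of_nat (fact m) * mat_pow V M m u v)"

lemma transition_matrix_eq_evolution:
  "transition_matrix V E t u v = evolution V (adj_matrix E) t u v"
  unfolding transition_matrix_def evolution_def ..

lemma mat_pow_add:
  assumes "finite V" "v \<in> V"
  shows "mat_pow V M (m + l) u v = (\<Sum>w\<in>V. mat_pow V M m u w * mat_pow V M l w v)"
  using assms(2)
proof (induction l arbitrary: v)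
  case 0
  then show ?case using assms(1) by (simp add: if_distrib[of "\<lambda>x. _ * x"] cong: if_cong)
next
  case (Suc l)
  have "mat_pow V M (m + Suc l) u v = (\<Sum>w\<in>V. mat_pow V M (m + l) u w * M w v)" by simp
  also have "\<dots> = (\<Sum>w\<in>V. (\<Sum>x\<in>V. mat_pow V M m u x * mat_pow V M l x w) * M w v)"
    using Suc.IH by simp
  also have "\<dots> = (\<Sum>x\<in>V. mat_pow V M m u x * (\<Sum>w\<in>V. mat_pow V M l x w * M w v))"
    unfolding sum_distrib_right sum_distrib_left mult.assoc by (rule sum.swap)
  finally show ?case by simp
qed

lemma mat_pow_1: "finite V \<Longrightarrow> u \<in> V \<Longrightarrow> mat_pow V M 1 u v = M u v"
  by (simp add: if_distrib[of "\<lambda>x. x * _"] cong: if_cong)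

lemma cnj_mat_pow:
  assumes "finite V" and hermitian: "\<And>x y. cnj (M x y) = M y x" and "x \<in> V" "y \<in> V"
  shows "cnj (mat_pow V M m x y) = mat_pow V M m y x"
  using assms(3,4)
proof (induction m arbitrary: x y)
  case 0
  then show ?case by auto
next
  case (Suc m)
  have "cnj (mat_pow V M (Suc m) x y) = (\<Sum>w\<in>V. M y w * mat_pow V M m w x)"
    by (simp add: Suc.IH[OF Suc.prems(1)] hermitian mult.commute)
  also have "\<dots> = (\<Sum>w\<in>V. mat_pow V M 1 y w * mat_pow V M m w x)"
    by (simp only: mat_pow_1[OF assms(1) Suc.prems(2)])
  also have "\<dots> = mat_pow V M (1 + m) y x"
    by (rule mat_pow_add[OF assms(1) Suc.prems(1), symmetric])
  finally show ?case by simp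
qed

lemma norm_mat_pow_le:
  assumes "finite V" and bound: "\<And>x y. cmod (M x y) \<le> C"
  shows "cmod (mat_pow V M m u v) \<le> (real (card V) * C) ^ m"
proof (induction m arbitrary: u v)
  case 0
  then show ?case by simp
next
  case (Suc m)
  have "C \<ge> 0" using bound[of u v] norm_ge_zero order_trans by blast
  have "cmod (mat_pow V M (Suc m) u v) \<le> (\<Sum>w\<in>V. cmod (mat_pow V M m u w) * cmod (M w v))"
    unfolding mat_pow.simps norm_mult[symmetric] by (rule norm_sum)
  also have "\<dots> \<le> (\<Sum>w\<in>V. (real (card V) * C) ^ m * C)"
    using \<open>C \<ge> 0\<close> by (intro sum_mono mult_mono Suc.IH bound) auto
  finally show ?case by (simp add: mult_ac)
qed

lemma summable_norm_evolution_series: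
  assumes "finite V" and "\<And>x y. cmod (M x y) \<le> C"
  shows "summable (\<lambda>m. norm ((\<i> * complex_of_real t) ^ m / of_nat (fact m) * mat_pow V M m u v))"
proof (rule summable_comparison_test)
  show "summable (\<lambda>m. inverse (fact m) * (\<bar>t\<bar> * (real (card V) * C)) ^ m)"
    by (rule summable_exp)
  have "norm (norm ((\<i> * complex_of_real t) ^ m / of_nat (fact m) * mat_pow V M m u v))
      = \<bar>t\<bar> ^ m / fact m * cmod (mat_pow V M m u v)" for m
    by (simp add: norm_mult norm_divide norm_power)
  also have "\<bar>t\<bar> ^ m / fact m * cmod (mat_pow V M m u v) \<le> \<bar>t\<bar> ^ m / fact m * (real (card V) * C) ^ m"
    for m by (intro mult_left_mono norm_mat_pow_le[OF assms]) simp
  finally show "\<exists>N. \<forall>m\<ge>N. norm (norm ((\<i> * complex_of_real t) ^ m / of_nat (fact m) * mat_pow V M m u v))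
      \<le> inverse (fact m) * (\<bar>t\<bar> * (real (card V) * C)) ^ m"
    by (simp add: power_mult_distrib divide_inverse mult_ac)
qed

lemma exp_series_add_imaginary:
  "(\<Sum>i\<le>N. (\<i> * complex_of_real t) ^ i / of_nat (fact i)
      * ((\<i> * complex_of_real s) ^ (N - i) / of_nat (fact (N - i))))
   = (\<i> * complex_of_real (t + s)) ^ N / of_nat (fact N)"
  using exp_series_add_commuting[of "\<i> * complex_of_real t" "\<i> * complex_of_real s" N]
  by (simp add: scaleR_conv_of_real divide_inverse distrib_left mult_ac)

lemma evolution_add:
  assumes V: "finite V" and bound: "\<And>x y. cmod (M x y) \<le> C" and "v \<in> V"
  shows "(\<Sum>w\<in>V. evolution V M t u w * evolution V M s w v) = evolution V M (t + s) u v"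
proof -
  define c where "c r i = (\<i> * complex_of_real r) ^ i / of_nat (fact i)" for r i
  have "(\<lambda>N. \<Sum>i\<le>N. c t i * mat_pow V M i u w * (c s (N - i) * mat_pow V M (N - i) w v))
      sums (evolution V M t u w * evolution V M s w v)" for w
    unfolding evolution_def c_def
    by (intro Cauchy_product_sums summable_norm_evolution_series[OF V bound])
  then have "(\<lambda>N. \<Sum>w\<in>V. \<Sum>i\<le>N. c t i * mat_pow V M i u w * (c s (N - i) * mat_pow V M (N - i) w v))
      sums (\<Sum>w\<in>V. evolution V M t u w * evolution V M s w v)"
    by (rule sums_sum)
  moreover have "(\<Sum>w\<in>V. \<Sum>i\<le>N. c t i * mat_pow V M i u w * (c s (N - i) * mat_pow V M (N - i) w v))
      = c (t + s) N * mat_pow V M N u v" for N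
  proof -
    have "(\<Sum>w\<in>V. \<Sum>i\<le>N. c t i * mat_pow V M i u w * (c s (N - i) * mat_pow V M (N - i) w v))
        = (\<Sum>i\<le>N. c t i * c s (N - i) * (\<Sum>w\<in>V. mat_pow V M i u w * mat_pow V M (N - i) w v))"
      unfolding sum_distrib_left by (subst sum.swap) (simp add: mult_ac)
    also have "\<dots> = (\<Sum>i\<le>N. c t i * c s (N - i)) * mat_pow V M N u v"
      unfolding sum_distrib_right
      by (intro sum.cong refl) (simp add: mat_pow_add[OF V \<open>v \<in> V\<close>, symmetric])
    finally show ?thesis
      unfolding c_def exp_series_add_imaginary .
  qed
  ultimately show ?thesis
    unfolding evolution_def c_def by (simp add: sums_iff)
qed

lemma evolution_0: "evolution V M 0 u v = (if u = v then 1 else 0)"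
proof -
  have "(\<lambda>m. (\<i> * complex_of_real 0) ^ m / of_nat (fact m) * mat_pow V M m u v)
      = (\<lambda>m. if m = 0 then (if u = v then 1 else 0) else 0)"
    by (simp add: fun_eq_iff power_0_left)
  then show ?thesis
    using sums_single[of 0 "\<lambda>_. if u = v then (1::complex) else 0"]
    unfolding evolution_def by (simp add: sums_iff)
qed

lemma cnj_evolution:
  assumes V: "finite V" and bound: "\<And>x y. cmod (M x y) \<le> C"
    and hermitian: "\<And>x y. cnj (M x y) = M y x" and "u \<in> V" "v \<in> V"
  shows "cnj (evolution V M t u v) = evolution V M (- t) v u"
proof -
  let ?f = "\<lambda>m. (\<i> * complex_of_real t) ^ m / of_nat (fact m) * mat_pow V M m u v"
  have "summable ?f"
    by (rule summable_norm_cancel[OF summable_norm_evolution_series[OF V bound]])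
  then have "(\<lambda>m. cnj (?f m)) sums cnj (evolution V M t u v)"
    unfolding evolution_def by (rule sums_cnj[THEN iffD2, OF summable_sums])
  moreover have "(\<lambda>m. cnj (?f m))
      = (\<lambda>m. (\<i> * complex_of_real (- t)) ^ m / of_nat (fact m) * mat_pow V M m v u)"
    using cnj_mat_pow[OF V hermitian \<open>u \<in> V\<close> \<open>v \<in> V\<close>] by (simp add: fun_eq_iff)
  ultimately show ?thesis
    unfolding evolution_def by (simp add: sums_iff)
qed

lemma evolution_row_norm:
  assumes V: "finite V" and bound: "\<And>x y. cmod (M x y) \<le> C"
    and hermitian: "\<And>x y. cnj (M x y) = M y x" and u: "u \<in> V"
  shows "(\<Sum>w\<in>V. (cmod (evolution V M t u w))\<^sup>2) = 1"
proof -
  have "complex_of_real (\<Sum>w\<in>V. (cmod (evolution V M t u w))\<^sup>2)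
      = (\<Sum>w\<in>V. evolution V M t u w * cnj (evolution V M t u w))"
    by (simp only: of_real_sum complex_norm_square)
  also have "\<dots> = (\<Sum>w\<in>V. evolution V M t u w * evolution V M (- t) w u)"
    by (intro sum.cong refl) (simp add: cnj_evolution[OF V bound hermitian u])
  also have "\<dots> = evolution V M (t + - t) u u"
    by (rule evolution_add[OF V bound u])
  also have "\<dots> = 1"
    by (simp add: evolution_0)
  finally show ?thesis by (simp only: of_real_eq_1_iff)
qed

lemma mat_pow_automorphism:
  assumes V: "finite V" and \<sigma>: "bij_betw \<sigma> V V"
    and invariant: "\<And>x y. x \<in> V \<Longrightarrow> y \<in> V \<Longrightarrow> M (\<sigma> x) (\<sigma> y) = M x y"
    and "u \<in> V" "v \<in> V"
  shows "mat_pow V M m (\<sigma> u) (\<sigma> v) = mat_pow V M m u v"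
  using \<open>v \<in> V\<close>
proof (induction m arbitrary: v)
  case 0
  then show ?case using \<open>u \<in> V\<close> \<sigma> by (auto simp: bij_betw_def dest: inj_onD)
next
  case (Suc m)
  have inj: "inj_on \<sigma> V" and onto: "\<sigma> ` V = V" using \<sigma> by (auto simp: bij_betw_def)
  have "mat_pow V M (Suc m) (\<sigma> u) (\<sigma> v) = (\<Sum>w\<in>\<sigma> ` V. mat_pow V M m (\<sigma> u) w * M w (\<sigma> v))"
    by (simp add: onto)
  also have "\<dots> = (\<Sum>w\<in>V. mat_pow V M m (\<sigma> u) (\<sigma> w) * M (\<sigma> w) (\<sigma> v))"
    by (simp add: sum.reindex[OF inj])
  also have "\<dots> = mat_pow V M (Suc m) u v"
    by (simp add: Suc invariant)
  finally show ?case .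
qed

lemma evolution_automorphism:
  assumes "finite V" "bij_betw \<sigma> V V"
    and "\<And>x y. x \<in> V \<Longrightarrow> y \<in> V \<Longrightarrow> M (\<sigma> x) (\<sigma> y) = M x y"
    and "u \<in> V" "v \<in> V"
  shows "evolution V M t (\<sigma> u) (\<sigma> v) = evolution V M t u v"
  unfolding evolution_def by (simp add: mat_pow_automorphism[where M = M, OF assms])

lemma no_perfect_transfer_if_stabiliser_moves:
  assumes V: "finite V" and bound: "\<And>x y. cmod (M x y) \<le> C"
    and hermitian: "\<And>x y. cnj (M x y) = M y x"
    and \<sigma>: "bij_betw \<sigma> V V" and invariant: "\<And>x y. x \<in> V \<Longrightarrow> y \<in> V \<Longrightarrow> M (\<sigma> x) (\<sigma> y) = M x y"
    and u: "u \<in> V" and v: "v \<in> V" and fixes_u: "\<sigma> u = u" and moves_v: "\<sigma> v \<noteq> v"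
  shows "cmod (evolution V M t u v) \<noteq> 1"
proof
  assume transfer: "cmod (evolution V M t u v) = 1"
  have moved_transfer: "cmod (evolution V M t u (\<sigma> v)) = 1"
    using evolution_automorphism[where M = M, OF V \<sigma> invariant u v] fixes_u transfer by simp
  have "\<sigma> v \<in> V" using \<sigma> v by (auto simp: bij_betw_def)
  then have "(\<Sum>w\<in>{v, \<sigma> v}. (cmod (evolution V M t u w))\<^sup>2) \<le> (\<Sum>w\<in>V. (cmod (evolution V M t u w))\<^sup>2)"
    using v by (intro sum_mono2[OF V]) auto
  then show False
    using evolution_row_norm[OF V bound hermitian u] transfer moved_transfer moves_v by simp
qed

lemma finite_ksubsets: "finite (ksubsets n k)"
  unfolding ksubsets_def by (rule finite_subset[of _ "Pow {1..n}"]) auto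

lemma bij_betw_image_ksubsets:
  assumes f: "bij_betw f {1..n} {1..n}"
  shows "bij_betw ((`) f) (ksubsets n k) (ksubsets n k)"
proof -
  have maps: "(`) h ` ksubsets n k \<subseteq> ksubsets n k" if "bij_betw h {1..n} {1..n}" for h
    using that by (auto simp: ksubsets_def bij_betw_def card_image inj_on_subset)
  have g: "bij_betw (inv_into {1..n} f) {1..n} {1..n}"
    by (rule bij_betw_inv_into[OF f])
  show ?thesis
  proof (rule bij_betw_byWitness[where f' = "(`) (inv_into {1..n} f)"])
    show "\<forall>X\<in>ksubsets n k. inv_into {1..n} f ` f ` X = X"
      using f by (auto simp: ksubsets_def bij_betw_def inv_into_image_cancel)
    show "\<forall>Y\<in>ksubsets n k. f ` inv_into {1..n} f ` Y = Y"
      using f by (auto simp: ksubsets_def bij_betw_def image_inv_into_cancel)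
  qed (use maps[OF f] maps[OF g] in auto)
qed

lemma jgraph_union_adj_image:
  assumes "inj f"
  shows "jgraph_union_adj S (f ` A) (f ` B) = jgraph_union_adj S A B"
  unfolding jgraph_union_adj_def
  using assms by (simp add: image_Int[symmetric] card_image inj_on_subset)

lemma ksubsets_exists_not_in_other:
  assumes "A \<in> ksubsets n k" "B \<in> ksubsets n k" "A \<noteq> B"
  obtains b where "b \<in> B" "b \<notin> A"
proof -
  have "finite A" using assms(1) unfolding ksubsets_def by (auto intro: finite_subset)
  then have "\<not> B \<subseteq> A"
    using assms card_subset_eq[of A B] unfolding ksubsets_def by auto
  then show ?thesis using that by blast
qed

lemma ksubsets_exists_outside_union:
  assumes "2 * k < n" "A \<in> ksubsets n k" "B \<in> ksubsets n k"
  obtains c where "c \<in> {1..n}" "c \<notin> A" "c \<notin> B"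
proof -
  have "card (A \<union> B) \<le> 2 * k"
    using card_Un_le[of A B] assms(2,3) unfolding ksubsets_def by simp
  then have "\<not> {1..n} \<subseteq> A \<union> B"
    using assms(1) card_mono[of "A \<union> B" "{1..n}"] assms(2,3)
    unfolding ksubsets_def by (auto intro: finite_subset)
  then show ?thesis using that by blast
qed

theorem mainTheorem17:
  fixes n k :: nat and S :: "nat set"
  assumes "2 * k \<le> n" and "1 \<le> k"
    and "S \<noteq> {}" and "S \<subseteq> {0..<k}"
    and "has_pst (ksubsets n k) (jgraph_union_adj S)"
  shows "n = 2 * k"
proof (rule ccontr)
  assume "n \<noteq> 2 * k"
  with assms(1) have "2 * k < n" by simp
  obtain A B \<tau> where A: "A \<in> ksubsets n k" and B: "B \<in> ksubsets n k" and "A \<noteq> B"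
    and transfer: "cmod (evolution (ksubsets n k) (adj_matrix (jgraph_union_adj S)) \<tau> A B) = 1"
    using assms(5) unfolding has_pst_def transition_matrix_eq_evolution by blast
  obtain b where "b \<in> B" "b \<notin> A"
    using ksubsets_exists_not_in_other[OF A B \<open>A \<noteq> B\<close>] .
  obtain c where "c \<in> {1..n}" "c \<notin> A" "c \<notin> B"
    using ksubsets_exists_outside_union[OF \<open>2 * k < n\<close> A B] .
  have "b \<in> {1..n}" using B \<open>b \<in> B\<close> by (auto simp: ksubsets_def)
  let ?\<sigma> = "(`) (Transposition.transpose b c)"
  have "cmod (evolution (ksubsets n k) (adj_matrix (jgraph_union_adj S)) \<tau> A B) \<noteq> 1"
  proof (rule no_perfect_transfer_if_stabiliser_moves[where \<sigma> = ?\<sigma>])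
    show "bij_betw ?\<sigma> (ksubsets n k) (ksubsets n k)"
      using \<open>b \<in> {1..n}\<close> \<open>c \<in> {1..n}\<close> by (intro bij_betw_image_ksubsets) simp
    show "?\<sigma> A = A" using \<open>b \<notin> A\<close> \<open>c \<notin> A\<close> by simp
    show "?\<sigma> B \<noteq> B" using \<open>b \<in> B\<close> \<open>c \<notin> B\<close> by (metis imageI transpose_apply_first)
    show "cnj (adj_matrix (jgraph_union_adj S) X Y) = adj_matrix (jgraph_union_adj S) Y X" for X Y
      by (simp add: adj_matrix_def jgraph_union_adj_def Int_commute)
    show "adj_matrix (jgraph_union_adj S) (?\<sigma> X) (?\<sigma> Y) = adj_matrix (jgraph_union_adj S) X Y" for X Y
      by (simp add: adj_matrix_def jgraph_union_adj_image inj_transpose)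
    show "cmod (adj_matrix (jgraph_union_adj S) X Y) \<le> 1" for X Y
      by (simp add: adj_matrix_def)
  qed (use finite_ksubsets A B in auto)
  then show False using transfer by simp
qed
end
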